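(* Let $m,n\ge 1$ and $t\ge 0$ be integers and define $K_0,\dots,K_n$ as in the context. If $K_i\le 2^{n-i}$ for all $1\le i\le n$, then $m\sum_{\ell=0}^{t}\binom{n}{\ell}\le 2^n$. Hence the smallest $n$ satisfying the condition of Theorem 2 is at least the smallest $n$ satisfying the sphere-packing (Hamming) bound $m\le 2^n/\sum_{\ell=0}^t\binom{n}{\ell}$.
   Context: Binomial coefficients with negative lower index are $0$. For $1\le i\le n$ put $A_{n-i}=\gcd\{\binom{n-i}{j}: t-i+1\le j\le t\}$ (equivalently the gcd of $\binom{n-i}{j}$ over $\max(0,t-i+1)\le j\le t$). Put $K_0=m\sum_{\ell=0}^{t}\binom{n}{\ell}$, and for $i=1,\dots,n$ define recursively $K_i$ to be the least integer such that $K_i\ge K_{i-1}/2$ and $K_i\equiv m\sum_{\ell=0}^{t}\binom{n-i}{\ell}\pmod{A_{n-i}}$. *)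

theory Defs
  imports Main "HOL-Number_Theory.Cong"
begin

text \<open>A_{n-i} = gcd of binom(n-i, j) over max(0, t-i+1) <= j <= t
  (natural subtraction t+1-i truncates at 0, matching the max).\<close>
definition Agcd :: "nat \<Rightarrow> nat \<Rightarrow> nat \<Rightarrow> nat" where
  "Agcd n t i = Gcd {(n - i) choose j | j. t + 1 - i \<le> j \<and> j \<le> t}"

fun Kseq :: "nat \<Rightarrow> nat \<Rightarrow> nat \<Rightarrow> nat \<Rightarrow> int" where
  "Kseq m n t 0 = int m * (\<Sum>l\<le>t. int (n choose l))"
| "Kseq m n t (Suc i) =
     (LEAST k::int. Kseq m n t i \<le> 2 * k \<and>
        [k = int m * (\<Sum>l\<le>t. int ((n - Suc i) choose l))] (mod int (Agcd n t (Suc i))))"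

end

theory Submission
  imports Defs
begin

(* Pascal's rule
   gives  sum_{l<=t} C(n,l) <= 2 * sum_{l<=t} C(n-1,l),  so the integer
   c = m * sum_{l<=t} C(n-1,l)  is itself a candidate for K_1: it satisfies the
   congruence trivially and  K_0 <= 2c.  Hence the set over which K_1 is the
   least element is nonempty; it is also bounded below (by K_0 div 2), so its
   least element exists and satisfies  K_0 <= 2 K_1.  Combined with the
   hypothesis K_1 <= 2^(n-1) this yields  K_0 <= 2^n, which is the claim. *)

lemma sum_choose_Suc:
  "(\<Sum>l\<le>t. Suc p choose l) = (\<Sum>l\<le>t. p choose l) + (\<Sum>l<t. p choose l)"
proof (induction t)
  case (Suc t)
  have "(\<Sum>l\<le>t. p choose l) = (\<Sum>l<t. p choose l) + (p choose t)"
    by (simp add: lessThan_Suc_atMost[symmetric])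
  with Suc show ?case by simp
qed simp

lemma sum_choose_Suc_le_double:
  "(\<Sum>l\<le>t. Suc p choose l) \<le> 2 * (\<Sum>l\<le>t. p choose l)"
proof -
  have "(\<Sum>l<t. p choose l) \<le> (\<Sum>l\<le>t. p choose l)"
    by (rule sum_mono2) auto
  then show ?thesis
    by (simp add: sum_choose_Suc)
qed

text \<open>The integers are not well-ordered, but a satisfiable predicate bounded
  below still has a least witness; this makes the LEAST in the definition of
  K_i meaningful.\<close>
lemma LeastI_int_bounded_below:
  fixes P :: "int \<Rightarrow> bool"
  assumes witness: "P c" and bound: "\<And>k. P k \<Longrightarrow> b \<le> k"
  shows "P (LEAST k. P k)"
proof -
  define Q where "Q j \<longleftrightarrow> P (b + int j)" for j :: nat
  have "Q (nat (c - b))"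
    using witness bound[OF witness] by (simp add: Q_def)
  then have least_Q: "Q (LEAST j. Q j)"
    by (rule LeastI)
  have "(LEAST k. P k) = b + int (LEAST j. Q j)"
  proof (rule Least_equality)
    show "P (b + int (LEAST j. Q j))"
      using least_Q by (simp add: Q_def)
  next
    fix y
    assume "P y"
    then have "b \<le> y" and "Q (nat (y - b))"
      using bound by (simp_all add: Q_def)
    moreover have "(LEAST j. Q j) \<le> nat (y - b)"
      using \<open>Q (nat (y - b))\<close> by (rule Least_le)
    ultimately show "b + int (LEAST j. Q j) \<le> y"
      by linarith
  qed
  with least_Q show ?thesis
    by (simp add: Q_def)
qed

lemma Kseq_0_le_double_Kseq_1:
  assumes "n \<ge> 1"
  shows "Kseq m n t 0 \<le> 2 * Kseq m n t 1"
proof -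
  define P where "P k \<longleftrightarrow> Kseq m n t 0 \<le> 2 * k \<and>
      [k = int m * (\<Sum>l\<le>t. int ((n - 1) choose l))] (mod int (Agcd n t 1))" for k
  define c where "c = int m * (\<Sum>l\<le>t. int ((n - 1) choose l))"
  have "(\<Sum>l\<le>t. n choose l) \<le> 2 * (\<Sum>l\<le>t. (n - 1) choose l)"
    using assms sum_choose_Suc_le_double[where p = "n - 1" and t = t] by simp
  then have "int m * int (\<Sum>l\<le>t. n choose l)
      \<le> int m * (2 * int (\<Sum>l\<le>t. (n - 1) choose l))"
    by (intro mult_left_mono) linarith+
  then have "int m * (\<Sum>l\<le>t. int (n choose l)) \<le> 2 * c"
    by (simp add: c_def algebra_simps)
  then have "P c"
    by (simp add: P_def c_def)
  moreover have "\<And>k. P k \<Longrightarrow> Kseq m n t 0 div 2 \<le> k"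
    unfolding P_def by linarith
  ultimately have "P (LEAST k. P k)"
    by (rule LeastI_int_bounded_below)
  moreover have "Kseq m n t 1 = (LEAST k. P k)"
    by (simp add: P_def)
  ultimately show ?thesis
    by (simp add: P_def)
qed

theorem theorem3:
  fixes m n t :: nat
  assumes "m \<ge> 1" and "n \<ge> 1"
    and "\<forall>i\<in>{1..n}. Kseq m n t i \<le> 2 ^ (n - i)"
  shows "int m * (\<Sum>l\<le>t. int (n choose l)) \<le> 2 ^ n"
proof -
  have "Kseq m n t 0 \<le> 2 * Kseq m n t 1"
    using assms(2) by (rule Kseq_0_le_double_Kseq_1)
  also have "\<dots> \<le> 2 * 2 ^ (n - 1)"
    using bspec[OF assms(3), of 1] assms(2) by (simp del: Kseq.simps)
  also have "\<dots> = 2 ^ n"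
    using assms(2) by (simp flip: power_Suc)
  finally show ?thesis
    by simp
qed

end
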